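(* For every graph $G$ of order $n$, $\gamma_{rdR}(G)\le n+\gamma(G)$. This bound is sharp: for every graph $H$ with no isolated vertices, the graph $H'$ obtained from $H$ by attaching two new pendant vertices to each vertex of $H$ satisfies $\gamma_{rdR}(H')=|V(H')|+\gamma(H')$.
   Context: All graphs are finite and simple. An RDRD function of $G$ is a function $f:V(G)\to\{0,1,2,3\}$ such that every vertex with value $0$ has at least two neighbors with value $2$ or at least one neighbor with value $3$, every vertex with value $1$ has a neighbor with value $2$ or $3$, and the subgraph induced by the vertices with value $0$ has no isolated vertices; $\gamma_{rdR}(G)$ is the minimum of $\sum_v f(v)$ over RDRD functions. $\gamma(G)$ denotes the domination number. *)

theory Defs
  imports Main
begin

definition graph :: "'a set \<Rightarrow> ('a \<Rightarrow> 'a \<Rightarrow> bool) \<Rightarrow> bool" where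
  "graph V E \<longleftrightarrow> finite V \<and>
     (\<forall>u v. E u v \<longrightarrow> u \<in> V \<and> v \<in> V \<and> u \<noteq> v \<and> E v u)"

definition rdrd_fun :: "'a set \<Rightarrow> ('a \<Rightarrow> 'a \<Rightarrow> bool) \<Rightarrow> ('a \<Rightarrow> nat) \<Rightarrow> bool" where
  "rdrd_fun V E f \<longleftrightarrow>
     (\<forall>v\<in>V. f v \<le> 3) \<and>
     (\<forall>v\<in>V. f v = 0 \<longrightarrow>
        (card {u \<in> V. E v u \<and> f u = 2} \<ge> 2 \<or> (\<exists>u\<in>V. E v u \<and> f u = 3))) \<and>
     (\<forall>v\<in>V. f v = 1 \<longrightarrow> (\<exists>u\<in>V. E v u \<and> (f u = 2 \<or> f u = 3))) \<and>
     (\<forall>v\<in>V. f v = 0 \<longrightarrow> (\<exists>u\<in>V. E v u \<and> f u = 0))"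

definition gamma_rdR :: "'a set \<Rightarrow> ('a \<Rightarrow> 'a \<Rightarrow> bool) \<Rightarrow> nat" where
  "gamma_rdR V E = Min {(\<Sum>v\<in>V. f v) | f. rdrd_fun V E f}"

definition dominating_set :: "'a set \<Rightarrow> ('a \<Rightarrow> 'a \<Rightarrow> bool) \<Rightarrow> 'a set \<Rightarrow> bool" where
  "dominating_set V E S \<longleftrightarrow> S \<subseteq> V \<and> (\<forall>v\<in>V. v \<in> S \<or> (\<exists>u\<in>S. E v u))"

definition domination_number :: "'a set \<Rightarrow> ('a \<Rightarrow> 'a \<Rightarrow> bool) \<Rightarrow> nat" where
  "domination_number V E = Min (card ` {S. dominating_set V E S})"

text \<open>H': attach two new pendant vertices Inr (v,False), Inr (v,True) to each vertex v.\<close>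
definition pend_V :: "'a set \<Rightarrow> ('a + 'a \<times> bool) set" where
  "pend_V V = Inl ` V \<union> Inr ` (V \<times> UNIV)"

fun pend_E :: "'a set \<Rightarrow> ('a \<Rightarrow> 'a \<Rightarrow> bool) \<Rightarrow> ('a + 'a \<times> bool) \<Rightarrow> ('a + 'a \<times> bool) \<Rightarrow> bool" where
  "pend_E V E (Inl u) (Inl v) = E u v"
| "pend_E V E (Inl u) (Inr (v, b)) = (u = v \<and> u \<in> V)"
| "pend_E V E (Inr (u, b)) (Inl v) = (u = v \<and> u \<in> V)"
| "pend_E V E (Inr _) (Inr _) = False"

end

theory Submission
  imports Defs
begin

text \<open>Upper bound: for a minimum dominating set S, the function that is 2 on S and 1 elsewhere
  is an RDRD function (it has no vertex of value 0), of weight |V| + |S|.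
  Sharpness: in H' every pendant vertex x of a vertex v must satisfy f x \<ge> 1, and f x = 1 forces
  f v \<ge> 2, so each closed star {v, x, y} carries weight at least 4 and the weight is at least
  4|V(H)| = |V(H')| + |V(H)|; on the other hand every dominating set of H' meets each star,
  so \<gamma>(H') = |V(H)|.\<close>

lemma finite_dominating_set_cards:
  assumes "finite V"
  shows "finite (card ` {S. dominating_set V E S})"
proof -
  have "{S. dominating_set V E S} \<subseteq> Pow V" by (auto simp: dominating_set_def)
  then show ?thesis using assms by (meson finite_Pow_iff finite_imageI finite_subset)
qed

lemma domination_number_attained:
  assumes "finite V"
  obtains S where "dominating_set V E S" "card S = domination_number V E"
proof -
  have "dominating_set V E V" by (simp add: dominating_set_def)
  then have "card ` {S. dominating_set V E S} \<noteq> {}" by blast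
  then have "domination_number V E \<in> card ` {S. dominating_set V E S}"
    unfolding domination_number_def by (rule Min_in[OF finite_dominating_set_cards[OF assms]])
  then show ?thesis using that by auto
qed

lemma domination_number_le:
  assumes "finite V" "dominating_set V E S"
  shows "domination_number V E \<le> card S"
  unfolding domination_number_def
  using Min_le[OF finite_dominating_set_cards[OF assms(1)]] assms(2) by blast

lemma finite_rdrd_weights:
  assumes "finite V"
  shows "finite {(\<Sum>v\<in>V. f v) | f. rdrd_fun V E f}"
proof -
  have "{(\<Sum>v\<in>V. f v) | f. rdrd_fun V E f} \<subseteq> {..3 * card V}"
  proof
    fix x assume "x \<in> {(\<Sum>v\<in>V. f v) | f. rdrd_fun V E f}"
    then obtain f where x: "x = (\<Sum>v\<in>V. f v)" and f: "rdrd_fun V E f" by blast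
    have "(\<Sum>v\<in>V. f v) \<le> (\<Sum>v\<in>V. 3)"
      by (rule sum_mono) (use f in \<open>auto simp: rdrd_fun_def\<close>)
    then show "x \<in> {..3 * card V}" using x by simp
  qed
  then show ?thesis by (rule finite_subset) simp
qed

lemma gamma_rdR_le:
  assumes "finite V" "rdrd_fun V E f"
  shows "gamma_rdR V E \<le> (\<Sum>v\<in>V. f v)"
  unfolding gamma_rdR_def using Min_le[OF finite_rdrd_weights[OF assms(1)]] assms(2) by blast

lemma gamma_rdR_greatest:
  assumes "finite V" "rdrd_fun V E g" "\<And>f. rdrd_fun V E f \<Longrightarrow> k \<le> (\<Sum>v\<in>V. f v)"
  shows "k \<le> gamma_rdR V E"
proof -
  have "{(\<Sum>v\<in>V. f v) | f. rdrd_fun V E f} \<noteq> {}" using assms(2) by blast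
  then have "gamma_rdR V E \<in> {(\<Sum>v\<in>V. f v) | f. rdrd_fun V E f}"
    unfolding gamma_rdR_def by (rule Min_in[OF finite_rdrd_weights[OF assms(1)]])
  then show ?thesis using assms(3) by auto
qed

lemma rdrd_fun_dominating_set:
  assumes "dominating_set V E S"
  shows "rdrd_fun V E (\<lambda>v. if v \<in> S then 2 else 1)"
  unfolding rdrd_fun_def
proof (intro conjI ballI impI)
  fix v assume "v \<in> V" "(if v \<in> S then 2 else 1) = (1::nat)"
  then obtain u where "u \<in> S" "E v u" using assms by (auto simp: dominating_set_def split: if_splits)
  then show "\<exists>u\<in>V. E v u \<and> ((if u \<in> S then 2 else 1) = (2::nat) \<or> (if u \<in> S then 2 else 1) = (3::nat))"
    using assms by (auto simp: dominating_set_def)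
qed (auto split: if_splits)

lemma sum_dominating_set_weight:
  assumes "finite V" "S \<subseteq> V"
  shows "(\<Sum>v\<in>V. if v \<in> S then 2 else 1 :: nat) = card V + card S"
proof -
  have "(\<Sum>v\<in>V. if v \<in> S then 2 else 1 :: nat) = (\<Sum>v\<in>V. 1 + of_bool (v \<in> S))"
    by (rule sum.cong) auto
  also have "\<dots> = (\<Sum>v\<in>V. 1) + (\<Sum>v\<in>V. of_bool (v \<in> S))"
    by (rule sum.distrib)
  finally show ?thesis using assms by (simp add: Int_absorb1)
qed

lemma gamma_rdR_le_card_plus_domination_number:
  assumes "graph V E"
  shows "gamma_rdR V E \<le> card V + domination_number V E"
proof -
  have fin: "finite V" using assms by (simp add: graph_def)
  obtain S where S: "dominating_set V E S" "card S = domination_number V E"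
    using domination_number_attained[OF fin] .
  have "S \<subseteq> V" using S(1) by (simp add: dominating_set_def)
  then show ?thesis
    using gamma_rdR_le[OF fin rdrd_fun_dominating_set[OF S(1)]] sum_dominating_set_weight[OF fin] S(2)
    by simp
qed

lemma graph_pend:
  assumes "graph V E"
  shows "graph (pend_V V) (pend_E V E)"
proof -
  have "pend_E V E u v \<Longrightarrow> u \<in> pend_V V \<and> v \<in> pend_V V \<and> u \<noteq> v \<and> pend_E V E v u" for u v
    by (erule pend_E.elims) (use assms in \<open>auto simp: graph_def pend_V_def\<close>)
  moreover have "finite (pend_V V)" using assms by (simp add: graph_def pend_V_def)
  ultimately show ?thesis unfolding graph_def by blast
qed

lemma pend_E_InrD: "pend_E V E (Inr (v, b)) u \<Longrightarrow> u = Inl v"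
  by (cases u) auto

lemma sum_pend_V:
  assumes "finite V"
  shows "(\<Sum>x\<in>pend_V V. f x) = (\<Sum>v\<in>V. f (Inl v) + f (Inr (v, False)) + f (Inr (v, True)))"
proof -
  have "(\<Sum>x\<in>pend_V V. f x) = (\<Sum>x\<in>Inl ` V. f x) + (\<Sum>x\<in>Inr ` (V \<times> UNIV). f x)"
    unfolding pend_V_def using assms by (intro sum.union_disjoint) auto
  also have "\<dots> = (\<Sum>v\<in>V. f (Inl v)) + (\<Sum>v\<in>V. \<Sum>b\<in>UNIV. f (Inr (v, b)))"
    by (simp add: sum.reindex sum.cartesian_product)
  finally show ?thesis by (simp add: UNIV_bool sum.distrib add.assoc)
qed

lemma card_pend_V:
  assumes "finite V"
  shows "card (pend_V V) = 3 * card V"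
proof -
  have "card (pend_V V) = (\<Sum>x\<in>pend_V V. 1 :: nat)" by simp
  also have "\<dots> = (\<Sum>v\<in>V. 1 + 1 + 1)" by (rule sum_pend_V[OF assms])
  also have "\<dots> = 3 * card V" by simp
  finally show ?thesis .
qed

lemma rdrd_fun_pendant:
  assumes f: "rdrd_fun (pend_V V) (pend_E V E) f" and v: "v \<in> V"
  shows "1 \<le> f (Inr (v, b))" and "f (Inr (v, b)) = 1 \<Longrightarrow> 2 \<le> f (Inl v)"
proof -
  have x: "Inr (v, b) \<in> pend_V V" using v by (simp add: pend_V_def)
  show "1 \<le> f (Inr (v, b))"
  proof (rule ccontr)
    assume "\<not> 1 \<le> f (Inr (v, b))"
    then have x0: "f (Inr (v, b)) = 0" by simp
    then obtain u where "pend_E V E (Inr (v, b)) u" "f u = 0"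
      using f x unfolding rdrd_fun_def by blast
    then have parent0: "f (Inl v) = 0" by (auto dest: pend_E_InrD)
    have "2 \<le> card {u \<in> pend_V V. pend_E V E (Inr (v, b)) u \<and> f u = 2}
        \<or> (\<exists>u\<in>pend_V V. pend_E V E (Inr (v, b)) u \<and> f u = 3)"
      using f x x0 unfolding rdrd_fun_def by blast
    moreover have "{u \<in> pend_V V. pend_E V E (Inr (v, b)) u \<and> f u = 2} = {}"
      using parent0 by (auto dest: pend_E_InrD)
    ultimately obtain u where "pend_E V E (Inr (v, b)) u" "f u = 3" by auto
    then show False using parent0 by (auto dest: pend_E_InrD)
  qed
  show "2 \<le> f (Inl v)" if x1: "f (Inr (v, b)) = 1"
  proof -
    obtain u where "pend_E V E (Inr (v, b)) u" "f u = 2 \<or> f u = 3"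
      using f x x1 unfolding rdrd_fun_def by blast
    then show ?thesis by (auto dest: pend_E_InrD)
  qed
qed

lemma rdrd_fun_pend_star_weight:
  assumes "rdrd_fun (pend_V V) (pend_E V E) f" "v \<in> V"
  shows "4 \<le> f (Inl v) + f (Inr (v, False)) + f (Inr (v, True))"
  using rdrd_fun_pendant[OF assms, of False] rdrd_fun_pendant[OF assms, of True] by linarith

lemma domination_number_pend:
  assumes "finite V"
  shows "domination_number (pend_V V) (pend_E V E) = card V"
proof (rule antisym)
  have fin': "finite (pend_V V)" using assms by (simp add: pend_V_def)
  have "dominating_set (pend_V V) (pend_E V E) (Inl ` V)"
    unfolding dominating_set_def pend_V_def by auto
  from domination_number_le[OF fin' this]
  show "domination_number (pend_V V) (pend_E V E) \<le> card V" by (simp add: card_image)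
  obtain S where S: "dominating_set (pend_V V) (pend_E V E) S"
    "card S = domination_number (pend_V V) (pend_E V E)"
    using domination_number_attained[OF fin'] .
  have "finite S" using S(1) fin' by (auto simp: dominating_set_def intro: finite_subset)
  define h where "h v = (if Inl v \<in> S then Inl v else Inr (v, False))" for v
  have "h ` V \<subseteq> S"
  proof
    fix x assume "x \<in> h ` V"
    then obtain v where v: "v \<in> V" "x = h v" by blast
    have "Inr (v, False) \<in> pend_V V" using v by (simp add: pend_V_def)
    then show "x \<in> S"
      using S(1) v by (auto simp: h_def dominating_set_def dest: pend_E_InrD)
  qed
  moreover have "inj_on h V" unfolding inj_on_def h_def by auto
  ultimately show "card V \<le> domination_number (pend_V V) (pend_E V E)"
    using card_inj_on_le \<open>finite S\<close> S(2) by metis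
qed

lemma gamma_rdR_pend:
  assumes "graph V E"
  shows "gamma_rdR (pend_V V) (pend_E V E) = 4 * card V"
proof (rule antisym)
  have fin: "finite V" using assms by (simp add: graph_def)
  have fin': "finite (pend_V V)" using fin by (simp add: pend_V_def)
  show "gamma_rdR (pend_V V) (pend_E V E) \<le> 4 * card V"
    using gamma_rdR_le_card_plus_domination_number[OF graph_pend[OF assms]]
    by (simp add: domination_number_pend[OF fin] card_pend_V[OF fin])
  have "dominating_set (pend_V V) (pend_E V E) (pend_V V)" by (simp add: dominating_set_def)
  from rdrd_fun_dominating_set[OF this]
  show "4 * card V \<le> gamma_rdR (pend_V V) (pend_E V E)"
  proof (rule gamma_rdR_greatest[OF fin'])
    fix f assume f: "rdrd_fun (pend_V V) (pend_E V E) f"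
    have "4 * card V = (\<Sum>v\<in>V. 4)" by simp
    also have "\<dots> \<le> (\<Sum>v\<in>V. f (Inl v) + f (Inr (v, False)) + f (Inr (v, True)))"
      by (rule sum_mono) (rule rdrd_fun_pend_star_weight[OF f])
    also have "\<dots> = (\<Sum>x\<in>pend_V V. f x)" by (rule sum_pend_V[OF fin, symmetric])
    finally show "4 * card V \<le> (\<Sum>x\<in>pend_V V. f x)" .
  qed
qed

theorem proposition2p5:
  shows "(\<forall>(V :: 'a set) E. graph V E \<longrightarrow>
            gamma_rdR V E \<le> card V + domination_number V E)
       \<and> (\<forall>(V :: 'b set) E. graph V E \<longrightarrow> (\<forall>v\<in>V. \<exists>u. E v u) \<longrightarrow>
            gamma_rdR (pend_V V) (pend_E V E)
              = card (pend_V V) + domination_number (pend_V V) (pend_E V E))"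
proof (intro conjI allI impI)
  fix V :: "'b set" and E
  assume "graph V E"
  then have "finite V" by (simp add: graph_def)
  with \<open>graph V E\<close> show "gamma_rdR (pend_V V) (pend_E V E)
      = card (pend_V V) + domination_number (pend_V V) (pend_E V E)"
    by (simp add: gamma_rdR_pend card_pend_V domination_number_pend)
qed (rule gamma_rdR_le_card_plus_domination_number)

end
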